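(* There exists a Stackelberg game $(G,L,F)$ such that $\mathcal{X}^{PS}\not\subseteq\mathcal{X}^{CCE}$.
   Context: A finite game is $G=(N,\{S_p\}_{p\in N},\{u_p\}_{p\in N})$ with players $N=\{1,\dots,n\}$, finite nonempty strategy sets $S_p$, and utilities $u_p:S\to\mathbb{R}$ on $S=\prod_{p\in N}S_p$; write $s=(s_p,s_{-p})$ with $s_{-p}\in S_{-p}=\prod_{q\neq p}S_q$. $\mathcal{X}=\Delta(S)$ is the set of probability distributions on $S$ and $u_p(x)=\sum_{s\in S}x(s)u_p(s)$ for $x\in\mathcal{X}$. For $P\subseteq N$, $\mathcal{X}^{CE}_P$ is the set of $x\in\mathcal{X}$ such that for every $p\in P$ and all $s_p\neq s_p'\in S_p$: $\sum_{s_{-p}\in S_{-p}} x(s_p,s_{-p})\,(u_p(s_p,s_{-p})-u_p(s_p',s_{-p}))\ge 0$; $\mathcal{X}^{CE}=\mathcal{X}^{CE}_N$ is the set of correlated equilibria of $G$. $\mathcal{X}^{CCE}$ is the set of coarse correlated equilibria of $G$: $x\in\mathcal{X}$ with $\sum_{s\in S}x(s)(u_p(s)-u_p(s_p',s_{-p}))\ge 0$ for all $p\in N$, $s_p'\in S_p$. A Stackelberg game (SG) is a triple $(G,L,F)$ with $L\cup F=N$ and $L\cap F=\emptyset$ (leaders and followers). For $P\subseteq N$, $\Pi_P$ is the set of ordered subsets of $P$ (finite sequences of pairwise distinct elements of $P$, including the empty sequence $\varnothing$); for $\pi\in\Pi_P$ and $p\in P$ not occurring in $\pi$, $\pi p$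 is $\pi$ with $p$ appended; when used as a set, $\pi$ means its set of entries. $\mathbf{X}=\prod_{\pi\in\Pi_L}\mathcal{X}^{CE}_{\pi\cup F}$, with elements $\mathbf{x}=[x_\pi]_{\pi\in\Pi_L}$. For $\mathbf{x}\in\mathbf{X}$ and $\pi\in\Pi_L$, $x_\pi$ is stable if $u_p(x_\pi)\ge u_p(x_{\pi p})$ for all $p\in L\setminus\pi$; $\mathbf{x}$ is stable if $x_\varnothing$ is stable, and perfectly stable if $x_\pi$ is stable for every $\pi\in\Pi_L$; $\mathbf{X}^{S}$ and $\mathbf{X}^{PS}$ denote the sets of stable and perfectly stable elements of $\mathbf{X}$. $\mathcal{X}^S=\{x_\varnothing:\mathbf{x}\in\mathbf{X}^S\}$ and $\mathcal{X}^{PS}=\{x_\varnothing:\mathbf{x}\in\mathbf{X}^{PS}\}$ (for the given SG). *)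

theory Defs
  imports Complex_Main "HOL-Library.FuncSet"
begin

definition finite_game :: "nat set \<Rightarrow> (nat \<Rightarrow> nat set) \<Rightarrow> (nat \<Rightarrow> (nat \<Rightarrow> nat) \<Rightarrow> real) \<Rightarrow> bool" where
  "finite_game N S u \<longleftrightarrow> finite N \<and> N \<noteq> {} \<and> (\<forall>p\<in>N. finite (S p) \<and> S p \<noteq> {})"

definition profiles :: "nat set \<Rightarrow> (nat \<Rightarrow> nat set) \<Rightarrow> (nat \<Rightarrow> nat) set" where
  "profiles N S = PiE N S"

definition distributions :: "nat set \<Rightarrow> (nat \<Rightarrow> nat set) \<Rightarrow> ((nat \<Rightarrow> nat) \<Rightarrow> real) set" where
  "distributions N S = {x. (\<forall>s\<in>profiles N S. x s \<ge> 0) \<and> (\<forall>s. s \<notin> profiles N S \<longrightarrow> x s = 0)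
                          \<and> (\<Sum>s\<in>profiles N S. x s) = 1}"

definition exp_util :: "nat set \<Rightarrow> (nat \<Rightarrow> nat set) \<Rightarrow> (nat \<Rightarrow> (nat \<Rightarrow> nat) \<Rightarrow> real) \<Rightarrow> nat \<Rightarrow> ((nat \<Rightarrow> nat) \<Rightarrow> real) \<Rightarrow> real" where
  "exp_util N S u p x = (\<Sum>s\<in>profiles N S. x s * u p s)"

text \<open>X^CE_P: the sum over s_{-p} of x(s_p,s_{-p}) is the sum over profiles s with s p = s_p;
  the profile (s_p', s_{-p}) is s(p := s_p').\<close>
definition CE_P :: "nat set \<Rightarrow> (nat \<Rightarrow> nat set) \<Rightarrow> (nat \<Rightarrow> (nat \<Rightarrow> nat) \<Rightarrow> real) \<Rightarrow> nat set \<Rightarrow> ((nat \<Rightarrow> nat) \<Rightarrow> real) set" where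
  "CE_P N S u P = {x \<in> distributions N S.
     \<forall>p\<in>P. \<forall>sp\<in>S p. \<forall>sp'\<in>S p. sp \<noteq> sp' \<longrightarrow>
       (\<Sum>s\<in>{s\<in>profiles N S. s p = sp}. x s * (u p s - u p (s(p := sp')))) \<ge> 0}"

definition CCE :: "nat set \<Rightarrow> (nat \<Rightarrow> nat set) \<Rightarrow> (nat \<Rightarrow> (nat \<Rightarrow> nat) \<Rightarrow> real) \<Rightarrow> ((nat \<Rightarrow> nat) \<Rightarrow> real) set" where
  "CCE N S u = {x \<in> distributions N S.
     \<forall>p\<in>N. \<forall>sp'\<in>S p. (\<Sum>s\<in>profiles N S. x s * (u p s - u p (s(p := sp')))) \<ge> 0}"

definition ordered_subsets :: "nat set \<Rightarrow> nat list set" where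
  "ordered_subsets P = {\<pi>. distinct \<pi> \<and> set \<pi> \<subseteq> P}"

definition boldX :: "nat set \<Rightarrow> (nat \<Rightarrow> nat set) \<Rightarrow> (nat \<Rightarrow> (nat \<Rightarrow> nat) \<Rightarrow> real) \<Rightarrow> nat set \<Rightarrow> nat set
     \<Rightarrow> (nat list \<Rightarrow> ((nat \<Rightarrow> nat) \<Rightarrow> real)) set" where
  "boldX N S u L F = {xx. \<forall>\<pi>\<in>ordered_subsets L. xx \<pi> \<in> CE_P N S u (set \<pi> \<union> F)}"

definition stable_at :: "nat set \<Rightarrow> (nat \<Rightarrow> nat set) \<Rightarrow> (nat \<Rightarrow> (nat \<Rightarrow> nat) \<Rightarrow> real) \<Rightarrow> nat set
     \<Rightarrow> (nat list \<Rightarrow> ((nat \<Rightarrow> nat) \<Rightarrow> real)) \<Rightarrow> nat list \<Rightarrow> bool" where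
  "stable_at N S u L xx \<pi> \<longleftrightarrow> (\<forall>p\<in>L - set \<pi>. exp_util N S u p (xx \<pi>) \<ge> exp_util N S u p (xx (\<pi> @ [p])))"

definition perfectly_stable :: "nat set \<Rightarrow> (nat \<Rightarrow> nat set) \<Rightarrow> (nat \<Rightarrow> (nat \<Rightarrow> nat) \<Rightarrow> real) \<Rightarrow> nat set
     \<Rightarrow> (nat list \<Rightarrow> ((nat \<Rightarrow> nat) \<Rightarrow> real)) \<Rightarrow> bool" where
  "perfectly_stable N S u L xx \<longleftrightarrow> (\<forall>\<pi>\<in>ordered_subsets L. stable_at N S u L xx \<pi>)"

definition XPS :: "nat set \<Rightarrow> (nat \<Rightarrow> nat set) \<Rightarrow> (nat \<Rightarrow> (nat \<Rightarrow> nat) \<Rightarrow> real) \<Rightarrow> nat set \<Rightarrow> nat set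
     \<Rightarrow> ((nat \<Rightarrow> nat) \<Rightarrow> real) set" where
  "XPS N S u L F = {xx [] | xx. xx \<in> boldX N S u L F \<and> perfectly_stable N S u L xx}"

definition stackelberg_game :: "nat set \<Rightarrow> (nat \<Rightarrow> nat set) \<Rightarrow> (nat \<Rightarrow> (nat \<Rightarrow> nat) \<Rightarrow> real) \<Rightarrow> nat set \<Rightarrow> nat set \<Rightarrow> bool" where
  "stackelberg_game N S u L F \<longleftrightarrow> finite_game N S u \<and> L \<union> F = N \<and> L \<inter> F = {}"

end

theory Submission
  imports Defs
begin

text \<open>Let the leader 1 be paid 1 exactly when it matches the action of the follower 0, who is
  indifferent. With the follower playing 0 and the leader mixing uniformly, the follower's
  correlated-equilibrium constraints hold trivially and the leader earns 1/2; committing changes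
  nothing for the leader, since the uniform distribution on all profiles is a correlated
  equilibrium also paying 1/2. Hence this distribution is perfectly stable, yet the leader
  gains by deviating to 0, so it is not a coarse correlated equilibrium.\<close>

definition prof2 :: "nat \<Rightarrow> nat \<Rightarrow> nat \<Rightarrow> nat" where
  "prof2 a b = (\<lambda>i. if i = 0 then a else if i = 1 then b else undefined)"

text \<open>The simp rules below mention \<open>Suc 0\<close> rather than \<open>1\<close>, since that is the simp normal form of
  \<open>1 :: nat\<close>.\<close>

lemma prof2_apply [simp]: "prof2 a b 0 = a" "prof2 a b (Suc 0) = b"
  by (simp_all add: prof2_def)

lemma prof2_upd [simp]: "(prof2 a b)(0 := c) = prof2 c b" "(prof2 a b)(Suc 0 := c) = prof2 a c"
  by (auto simp: prof2_def fun_eq_iff)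

lemma inj_prof2: "inj (\<lambda>(a, b). prof2 a b)"
  by (auto intro!: injI simp: fun_eq_iff prof2_def split: if_splits)

lemma profiles_two_players: "profiles {0, 1} S = (\<lambda>(a, b). prof2 a b) ` (S 0 \<times> S 1)"
proof (intro subset_antisym subsetI)
  fix s assume "s \<in> profiles {0, 1} S"
  then have "s = prof2 (s 0) (s 1)" and "(s 0, s 1) \<in> S 0 \<times> S 1"
    by (auto simp: profiles_def prof2_def fun_eq_iff PiE_def extensional_def)
  then show "s \<in> (\<lambda>(a, b). prof2 a b) ` (S 0 \<times> S 1)"
    by (metis (no_types, lifting) case_prod_conv image_eqI)
qed (auto simp: profiles_def prof2_def PiE_def extensional_def)

lemma sum_profiles_two_players:
  "(\<Sum>s\<in>profiles {0, 1} S. f s) = (\<Sum>a\<in>S 0. \<Sum>b\<in>S 1. f (prof2 a b))"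
proof -
  have "inj_on (\<lambda>(a, b). prof2 a b) (S 0 \<times> S 1)"
    using inj_prof2 by (rule inj_on_subset) simp
  then show ?thesis
    unfolding profiles_two_players sum.cartesian_product
    by (subst sum.reindex) (simp_all add: case_prod_unfold)
qed

lemma prof2_in_profiles_iff [simp]:
  "prof2 a b \<in> profiles {0, Suc 0} S \<longleftrightarrow> a \<in> S 0 \<and> b \<in> S (Suc 0)"
  by (auto simp: profiles_def prof2_def PiE_iff extensional_def)

lemma ordered_subsets_singleton: "ordered_subsets {l} = {[], [l]}"
proof (intro subset_antisym subsetI)
  fix \<pi> assume "\<pi> \<in> ordered_subsets {l}"
  then have "distinct \<pi>" "set \<pi> \<subseteq> {l}" by (auto simp: ordered_subsets_def)
  then show "\<pi> \<in> {[], [l]}"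
    by (cases \<pi>) (auto simp: subset_singleton_iff)
qed (auto simp: ordered_subsets_def)

text \<open>With a single leader only the empty commitment sequence imposes a stability constraint.\<close>

lemma XPS_single_leaderI:
  assumes "x \<in> CE_P N S u F" and "y \<in> CE_P N S u (insert l F)"
    and "exp_util N S u l y \<le> exp_util N S u l x"
  shows "x \<in> XPS N S u {l} F"
proof -
  define xx where "xx = (\<lambda>\<pi>::nat list. if \<pi> = [] then x else y)"
  have "xx \<in> boldX N S u {l} F"
    using assms(1,2) by (auto simp: boldX_def ordered_subsets_singleton xx_def)
  moreover have "perfectly_stable N S u {l} xx"
    using assms(3) by (auto simp: perfectly_stable_def ordered_subsets_singleton stable_at_def xx_def)
  moreover have "xx [] = x" by (simp add: xx_def)
  ultimately show ?thesis
    unfolding XPS_def by blast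
qed

lemma CE_P_indifferent:
  assumes "x \<in> distributions N S"
    and "\<And>p s sp'. p \<in> P \<Longrightarrow> u p (s(p := sp')) = u p s"
  shows "x \<in> CE_P N S u P"
  using assms by (simp add: CE_P_def)

definition matching_util :: "nat \<Rightarrow> (nat \<Rightarrow> nat) \<Rightarrow> real" where
  "matching_util p s = (if p = 1 \<and> s 0 = s 1 then 1 else 0)"

definition follower_zero :: "(nat \<Rightarrow> nat) \<Rightarrow> real" where
  "follower_zero s = (if s \<in> profiles {0, 1} (\<lambda>_. {0, 1}) \<and> s 0 = 0 then 1/2 else 0)"

definition uniform :: "(nat \<Rightarrow> nat) \<Rightarrow> real" where
  "uniform s = (if s \<in> profiles {0, 1} (\<lambda>_. {0, 1}) then 1/4 else 0)"

lemma follower_zero_distribution: "follower_zero \<in> distributions {0, 1} (\<lambda>_. {0, 1})"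
  unfolding distributions_def sum_profiles_two_players by (auto simp: follower_zero_def)

lemma uniform_distribution: "uniform \<in> distributions {0, 1} (\<lambda>_. {0, 1})"
  unfolding distributions_def sum_profiles_two_players by (auto simp: uniform_def)

lemma follower_zero_CE: "follower_zero \<in> CE_P {0, 1} (\<lambda>_. {0, 1}) matching_util {0}"
  by (rule CE_P_indifferent[OF follower_zero_distribution]) (simp add: matching_util_def)

lemma uniform_CE: "uniform \<in> CE_P {0, 1} (\<lambda>_. {0, 1}) matching_util {1, 0}"
proof -
  have "finite (profiles {0, 1} (\<lambda>_. {0, 1::nat}))"
    by (simp add: profiles_def finite_PiE)
  note filter_as_if = sum.inter_filter[OF this]
  have "(\<Sum>s\<in>{s \<in> profiles {0, 1} (\<lambda>_. {0, 1}). s p = sp}.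
          uniform s * (matching_util p s - matching_util p (s(p := sp')))) \<ge> 0"
    if "p \<in> {1, 0}" "sp \<in> {0, 1}" "sp' \<in> {0, 1}" for p sp sp' :: nat
    using that unfolding filter_as_if sum_profiles_two_players
    by (auto simp: uniform_def matching_util_def)
  with uniform_distribution show ?thesis
    by (simp add: CE_P_def)
qed

lemma exp_util_leader:
  "exp_util {0, 1} (\<lambda>_. {0, 1}) matching_util 1 follower_zero = 1/2"
  "exp_util {0, 1} (\<lambda>_. {0, 1}) matching_util 1 uniform = 1/2"
  unfolding exp_util_def sum_profiles_two_players
  by (simp_all add: follower_zero_def uniform_def matching_util_def)

lemma follower_zero_not_CCE: "follower_zero \<notin> CCE {0, 1} (\<lambda>_. {0, 1}) matching_util"
proof
  assume "follower_zero \<in> CCE {0, 1} (\<lambda>_. {0, 1}) matching_util"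
  then have "(\<Sum>s\<in>profiles {0, 1} (\<lambda>_. {0, 1}).
      follower_zero s * (matching_util 1 s - matching_util 1 (s(1 := 0)))) \<ge> 0"
    unfolding CCE_def by blast
  then show False
    unfolding sum_profiles_two_players by (simp add: follower_zero_def matching_util_def)
qed

theorem mainTheorem13:
  shows "\<exists>N S u L F. stackelberg_game N S u L F \<and> \<not> (XPS N S u L F \<subseteq> CCE N S u)"
proof (intro exI conjI)
  show "stackelberg_game {0, 1} (\<lambda>_. {0, 1}) matching_util {1} {0}"
    by (auto simp: stackelberg_game_def finite_game_def)
  have "follower_zero \<in> XPS {0, 1} (\<lambda>_. {0, 1}) matching_util {1} {0}"
    using follower_zero_CE uniform_CE exp_util_leader
    by (intro XPS_single_leaderI[where y = uniform]) (simp_all add: insert_commute)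
  with follower_zero_not_CCE
  show "\<not> XPS {0, 1} (\<lambda>_. {0, 1}) matching_util {1} {0} \<subseteq> CCE {0, 1} (\<lambda>_. {0, 1}) matching_util"
    by blast
qed

end
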